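(* Let $A, B \in \mathbb{R}^{n\times n}$ be symmetric, isospectral, and both friendly. Then there is at most one doubly stochastic matrix $X \in \mathcal{D}(n)$ with $\|XA - BX\|_F^2 = 0$ (equivalently, with $XA = BX$).
   Context: A real symmetric matrix $A$ is called friendly if all of its eigenvalues are distinct (each has multiplicity one) and each unit eigenvector $u$ satisfies $\langle u, \mathbb{1}_n\rangle \ne 0$, where $\mathbb{1}_n$ is the all-ones vector. $A$ and $B$ are isospectral if they have the same distinct eigenvalues with the same multiplicities. $\mathcal{D}(n)$ is the set of doubly stochastic $n\times n$ matrices (entrywise nonnegative with all row and column sums equal to 1). $\|\cdot\|_F$ is the Frobenius norm. *)

theory Defs
  imports "HOL-Analysis.Analysis" "HOL-Computational_Algebra.Polynomial"
begin

definition sym_mat :: "real^'n^'n \<Rightarrow> bool" where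
  "sym_mat A \<longleftrightarrow> transpose A = A"

definition char_pol :: "real^'n^'n \<Rightarrow> real poly" where
  "char_pol A = det (\<chi> i j. (if i = j then [:0, 1:] else 0) - [:A $ i $ j:])"

definition eig_mult :: "real^'n^'n \<Rightarrow> real \<Rightarrow> nat" where
  "eig_mult A c = order c (char_pol A)"

definition isospectral :: "real^'n^'n \<Rightarrow> real^'n^'n \<Rightarrow> bool" where
  "isospectral A B \<longleftrightarrow> (\<forall>c. eig_mult A c = eig_mult B c)"

definition friendly :: "real^'n^'n \<Rightarrow> bool" where
  "friendly A \<longleftrightarrow> sym_mat A \<and> (\<forall>c. eig_mult A c \<le> 1) \<and>
     (\<forall>u c. norm u = 1 \<and> A *v u = c *\<^sub>R u \<longrightarrow> u \<bullet> (1::real^'n) \<noteq> 0)"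

definition doubly_stochastic :: "real^'n^'n \<Rightarrow> bool" where
  "doubly_stochastic X \<longleftrightarrow> (\<forall>i j. X $ i $ j \<ge> 0) \<and>
     (\<forall>i. (\<Sum>j\<in>UNIV. X $ i $ j) = 1) \<and> (\<forall>j. (\<Sum>i\<in>UNIV. X $ i $ j) = 1)"

definition frob_norm :: "real^'n^'n \<Rightarrow> real" where
  "frob_norm M = sqrt (\<Sum>i\<in>UNIV. \<Sum>j\<in>UNIV. (M $ i $ j)\<^sup>2)"

end

theory Submission
  imports Defs
begin

text \<open>
  If X and Y are two doubly stochastic solutions of XA = BX, then Z = X - Y satisfies
  ZA = BZ and Z1 = 0. Transposing, the range of Z^T is invariant under the symmetric
  matrix A, so if Z \<noteq> 0 it contains a unit eigenvector u = Z^T w of A. But then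
  \<langle>u, 1\<rangle> = \<langle>w, Z1\<rangle> = 0, contradicting friendliness of A.
\<close>

lemma symmetric_matrix_inner_commute:
  fixes A :: "real^'n^'n"
  assumes "transpose A = A"
  shows "(A *v x) \<bullet> y = x \<bullet> (A *v y)"
  by (metis assms dot_lmul_matrix transpose_matrix_vector)

lemma linear_coeff_eq_0_if_quadratic_nonpos:
  fixes a b :: real
  assumes "\<And>t. 2 * t * a + t\<^sup>2 * b \<le> 0"
  shows "a = 0"
proof (rule ccontr)
  assume a: "a \<noteq> 0"
  define c where "c = 1 + \<bar>b\<bar>"
  have c: "c > 0" "2 * c + b > 0" unfolding c_def by auto
  have "2 * (a / c) * a + (a / c)\<^sup>2 * b \<le> 0" by (rule assms)
  hence "(2 * c + b) * a\<^sup>2 / c\<^sup>2 \<le> 0" using c by (simp add: field_simps power2_eq_square)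
  moreover have "(2 * c + b) * a\<^sup>2 / c\<^sup>2 > 0" using c a by simp
  ultimately show False by linarith
qed

lemma rayleigh_quotient_attains_max:
  fixes A :: "real^'n^'n"
  assumes S: "subspace S" and x: "x \<in> S" "x \<noteq> 0"
  obtains u where "u \<in> S" "norm u = 1"
    "\<And>y. y \<in> S \<Longrightarrow> y \<bullet> (A *v y) \<le> (u \<bullet> (A *v u)) * (y \<bullet> y)"
proof -
  define q where "q y = y \<bullet> (A *v y)" for y
  define K where "K = S \<inter> sphere 0 1"
  have normalize_in_K: "y /\<^sub>R norm y \<in> K" if "y \<in> S" "y \<noteq> 0" for y
    unfolding K_def using that S by (simp add: subspace_scale)
  have "compact K"
    unfolding K_def using closed_subspace[OF S] by (simp add: closed_Int_compact)
  moreover have "K \<noteq> {}" using normalize_in_K[OF x] by blast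
  moreover have "continuous_on K q"
    unfolding q_def by (intro continuous_intros linear_continuous_on bounded_linear_intros)
  ultimately obtain u where u: "u \<in> K" and umax: "\<And>y. y \<in> K \<Longrightarrow> q y \<le> q u"
    using continuous_attains_sup by metis
  have "q y \<le> q u * (y \<bullet> y)" if y: "y \<in> S" for y
  proof (cases "y = 0")
    case True
    then show ?thesis by (simp add: q_def)
  next
    case False
    have "q y / (norm y)\<^sup>2 = q (y /\<^sub>R norm y)"
      by (simp add: q_def matrix_vector_mult_scaleR power2_eq_square field_simps)
    also have "\<dots> \<le> q u" using umax normalize_in_K[OF y False] by blast
    finally show ?thesis using False by (simp add: divide_le_eq dot_square_norm)
  qed
  with u that show ?thesis by (auto simp: K_def q_def)
qed

lemma rayleigh_maximizer_is_eigenvector: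
  fixes A :: "real^'n^'n"
  assumes sym: "transpose A = A" and S: "subspace S"
    and u: "u \<in> S" "norm u = 1"
    and max: "\<And>y. y \<in> S \<Longrightarrow> y \<bullet> (A *v y) \<le> (u \<bullet> (A *v u)) * (y \<bullet> y)"
    and Au: "A *v u \<in> S"
  shows "A *v u = (u \<bullet> (A *v u)) *\<^sub>R u"
proof -
  define M where "M = u \<bullet> (A *v u)"
  have uu: "u \<bullet> u = 1" using u(2) by (simp add: dot_square_norm)
  \<comment> \<open>First variation of the Rayleigh quotient at u in a direction y \<perp> u.\<close>
  have orth: "y \<bullet> (A *v u) = 0" if y: "y \<in> S" "y \<bullet> u = 0" for y
  proof (rule linear_coeff_eq_0_if_quadratic_nonpos)
    fix t :: real
    have Auy: "u \<bullet> (A *v y) = y \<bullet> (A *v u)"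
      using symmetric_matrix_inner_commute[OF sym, of u y] by (simp add: inner_commute)
    have "u + t *\<^sub>R y \<in> S" using u y S by (simp add: subspace_add subspace_scale)
    from max[OF this]
    have le: "(u + t *\<^sub>R y) \<bullet> (A *v (u + t *\<^sub>R y)) \<le> M * ((u + t *\<^sub>R y) \<bullet> (u + t *\<^sub>R y))"
      unfolding M_def .
    have expand_q: "(u + t *\<^sub>R y) \<bullet> (A *v (u + t *\<^sub>R y))
        = M + 2 * t * (y \<bullet> (A *v u)) + t\<^sup>2 * (y \<bullet> (A *v y))"
      using Auy unfolding M_def
      by (simp add: matrix_vector_right_distrib matrix_vector_mult_scaleR
          inner_add_left inner_add_right power2_eq_square algebra_simps)
    have expand_norm: "(u + t *\<^sub>R y) \<bullet> (u + t *\<^sub>R y) = 1 + t\<^sup>2 * (y \<bullet> y)"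
      using uu y(2) by (simp add: inner_add_left inner_add_right inner_commute power2_eq_square)
    show "2 * t * (y \<bullet> (A *v u)) + t\<^sup>2 * (y \<bullet> (A *v y) - M * (y \<bullet> y)) \<le> 0"
      using le unfolding expand_q expand_norm by (simp add: algebra_simps)
  qed
  define r where "r = A *v u - M *\<^sub>R u"
  have "r \<in> S" unfolding r_def using Au u S by (simp add: subspace_diff subspace_scale)
  moreover have ru: "r \<bullet> u = 0"
    unfolding r_def M_def using uu by (simp add: inner_diff_left inner_commute[of "A *v u" u])
  ultimately have "r \<bullet> (A *v u) = 0" by (rule orth)
  with ru have "r \<bullet> r = 0" unfolding r_def by (simp add: inner_diff_right)
  then show ?thesis by (simp add: r_def M_def)
qed

lemma symmetric_matrix_invariant_subspace_has_eigenvector: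
  fixes A :: "real^'n^'n"
  assumes sym: "transpose A = A" and S: "subspace S"
    and inv: "\<And>x. x \<in> S \<Longrightarrow> A *v x \<in> S"
    and x: "x \<in> S" "x \<noteq> 0"
  obtains u c where "u \<in> S" "norm u = 1" "A *v u = c *\<^sub>R u"
proof -
  obtain u where u: "u \<in> S" "norm u = 1"
    and max: "\<And>y. y \<in> S \<Longrightarrow> y \<bullet> (A *v y) \<le> (u \<bullet> (A *v u)) * (y \<bullet> y)"
    using rayleigh_quotient_attains_max[OF S x] by metis
  show ?thesis
    using that u rayleigh_maximizer_is_eigenvector[OF sym S u max inv[OF u(1)]] by blast
qed

lemma frob_norm_eq_0_iff: "frob_norm M = 0 \<longleftrightarrow> M = 0"
proof -
  have "frob_norm M = 0 \<longleftrightarrow> (\<forall>i j. (M $ i $ j)\<^sup>2 = 0)"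
    unfolding frob_norm_def
    by (simp add: sum_nonneg_eq_0_iff sum_nonneg)
  then show ?thesis by (simp add: vec_eq_iff)
qed

lemma doubly_stochastic_mult_ones:
  "doubly_stochastic X \<Longrightarrow> X *v 1 = 1"
  by (simp add: doubly_stochastic_def vec_eq_iff matrix_vector_mult_def)

lemma intertwiner_eq_0_if_kills_ones:
  fixes A B Z :: "real^'n^'n"
  assumes fr: "friendly A" and symB: "transpose B = B"
    and ZAB: "Z ** A = B ** Z" and Z1: "Z *v 1 = 0"
  shows "Z = 0"
proof (rule ccontr)
  assume "Z \<noteq> 0"
  moreover have "transpose (0::real^'n^'n) = 0" by (simp add: vec_eq_iff transpose_def)
  ultimately have "transpose Z \<noteq> 0" by (metis transpose_transpose)
  then obtain v where v: "transpose Z *v v \<noteq> 0"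
    by (metis matrix_eq matrix_vector_mult_0)
  define S where "S = range ((*v) (transpose Z))"
  have S: "subspace S"
    unfolding S_def by (intro linear_subspace_image subspace_UNIV matrix_vector_mul_linear)
  have symA: "transpose A = A" using fr by (simp add: friendly_def sym_mat_def)
  have AZ: "A ** transpose Z = transpose Z ** B"
    using arg_cong[OF ZAB, of transpose] by (simp add: matrix_transpose_mul symA symB)
  have "A *v x \<in> S" if "x \<in> S" for x
  proof -
    obtain w where "x = transpose Z *v w" using \<open>x \<in> S\<close> unfolding S_def by blast
    then have "A *v x = transpose Z *v (B *v w)" by (simp only: matrix_vector_mul_assoc AZ)
    then show ?thesis unfolding S_def by blast
  qed
  then obtain u c where u: "u \<in> S" "norm u = 1" "A *v u = c *\<^sub>R u"
    using symmetric_matrix_invariant_subspace_has_eigenvector[OF symA S, of "transpose Z *v v"]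
      v unfolding S_def by blast
  obtain w where "u = transpose Z *v w" using u(1) unfolding S_def by blast
  then have "u \<bullet> 1 = w \<bullet> (Z *v 1)" by (simp add: transpose_matrix_vector dot_lmul_matrix)
  with Z1 fr u show False unfolding friendly_def by simp
qed

theorem mainTheorem9:
  fixes A B :: "real^'n^'n"
  assumes "sym_mat A" and "sym_mat B"
    and "isospectral A B"
    and "friendly A" and "friendly B"
  shows "\<forall>X Y. doubly_stochastic X \<and> (frob_norm (X ** A - B ** X))\<^sup>2 = 0 \<and>
                doubly_stochastic Y \<and> (frob_norm (Y ** A - B ** Y))\<^sup>2 = 0 \<longrightarrow> X = Y"
proof (intro allI impI)
  fix X Y :: "real^'n^'n"
  assume "doubly_stochastic X \<and> (frob_norm (X ** A - B ** X))\<^sup>2 = 0 \<and>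
          doubly_stochastic Y \<and> (frob_norm (Y ** A - B ** Y))\<^sup>2 = 0"
  then have X: "doubly_stochastic X" "X ** A = B ** X"
    and Y: "doubly_stochastic Y" "Y ** A = B ** Y"
    by (simp_all add: frob_norm_eq_0_iff)
  have "(X - Y) ** A = B ** (X - Y)"
    using X Y by (simp add: vec_eq_iff matrix_matrix_mult_def sum_subtractf algebra_simps)
  moreover have "(X - Y) *v 1 = 0"
    using X Y by (simp add: doubly_stochastic_mult_ones matrix_vector_mult_diff_rdistrib)
  moreover have "transpose B = B" using \<open>sym_mat B\<close> by (simp add: sym_mat_def)
  ultimately have "X - Y = 0" by (intro intertwiner_eq_0_if_kills_ones[OF \<open>friendly A\<close>])
  then show "X = Y" by simp
qed

end
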